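(* Let $\alpha$ be an ordinal number such that either $\Pi(\Pi_\alpha\mathcal A)=\Pi_\alpha\mathcal A=\Sigma(\Pi_\alpha\mathcal A)$, or $\Pi(\Sigma_\alpha\mathcal A)=\Sigma_\alpha\mathcal A=\Sigma(\Sigma_\alpha\mathcal A)$. Then $\alpha$ is uncountable.
   Context: $\mathbb N=\{1,2,\dots\}$, and $\mathbb N^{\mathbb N}$ is the Baire space. For $m,n\in\mathbb N$ let $B^m_n=\{f\in\mathbb N^{\mathbb N}: f(n)=m\}$. $\mathcal A$ is the family of all sets $T_1\cup\dots\cup T_L$ ($L\in\mathbb N$), each $T_\ell$ a finite intersection $S_1\cap\dots\cap S_K$ ($K\in\mathbb N$) of sets of the form $B^m_n$ or $\mathbb N^{\mathbb N}\setminus B^m_n$. For a family $\mathcal X$ of subsets of $\mathbb N^{\mathbb N}$, $\Pi(\mathcal X)$ is the family of all countable intersections $\bigcap_n X_n$ and $\Sigma(\mathcal X)$ that of all countable unions $\bigcup_n X_n$ with $X_n\in\mathcal X$. Define by transfinite recursion $\Pi_0\mathcal A=\Sigma_0\mathcal A=\mathcal A$, $\Pi_{\beta+1}\mathcal A=\Pi(\Sigma_\beta\mathcal A)$, $\Sigma_{\beta+1}\mathcal A=\Sigma(\Pi_\beta\mathcal A)$, and for limit $\lambda$, $\Pi_\lambda\mathcal A=\bigcup_{\beta<\lambda}\Pi_\beta\mathcal A$, $\Sigma_\lambda\mathcal A=\bigcup_{\beta<\lambda}\Sigma_\beta\mathcal A$. (In the paper's terminology, the two hypotheses say that the hierarchy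 of extensions of the zero valuation on $\mathcal A$ has collapsed at $\Pi_\alpha\mathcal A$, resp. at $\Sigma_\alpha\mathcal A$.) *)

theory Defs
  imports Main "HOL-Library.Countable_Set"
begin

text \<open>Baire space: points are functions nat => nat. The paper's index set
  {1,2,...} is relabelled as {0,1,...} (coordinates and values shifted by one),
  which is an isomorphic copy of the Baire space.\<close>

type_synonym baire = "nat \<Rightarrow> nat"

definition Bset :: "nat \<Rightarrow> nat \<Rightarrow> baire set" where
  "Bset m n = {f. f n = m}"

definition literals :: "baire set set" where
  "literals = {Bset m n | m n. True} \<union> {- Bset m n | m n. True}"

definition conjs :: "baire set set" where
  "conjs = {\<Inter> (set l) | l. l \<noteq> [] \<and> set l \<subseteq> literals}"

definition algA :: "baire set set" where
  "algA = {\<Union> (set l) | l. l \<noteq> [] \<and> set l \<subseteq> conjs}"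

definition PiF :: "baire set set \<Rightarrow> baire set set" where
  "PiF X = {\<Inter> (range Y) | Y. \<forall>n::nat. Y n \<in> X}"

definition SigmaF :: "baire set set \<Rightarrow> baire set set" where
  "SigmaF X = {\<Union> (range Y) | Y. \<forall>n::nat. Y n \<in> X}"

text \<open>Ordinals are represented by elements of well-orders: the element a of
  the field of a well-order r stands for the ordinal which is the order type of
  the strict initial segment underS r a. The pair hier r a is
  (Pi_alpha A, Sigma_alpha A), defined by transfinite recursion.\<close>

definition hier_step ::
  "'b rel \<Rightarrow> ('b \<Rightarrow> baire set set \<times> baire set set) \<Rightarrow> 'b \<Rightarrow> baire set set \<times> baire set set" where
  "hier_step r h x =
     (if underS r x = {} then (algA, algA)
      else if (\<exists>b \<in> underS r x. \<forall>c \<in> underS r x. (c, b) \<in> r)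
      then (let b = (THE b. b \<in> underS r x \<and> (\<forall>c \<in> underS r x. (c, b) \<in> r))
            in (PiF (snd (h b)), SigmaF (fst (h b))))
      else (\<Union>b \<in> underS r x. fst (h b), \<Union>b \<in> underS r x. snd (h b)))"

definition hier :: "'b rel \<Rightarrow> 'b \<Rightarrow> baire set set \<times> baire set set" where
  "hier r = wfrec (r - Id) (hier_step r)"

definition PiH :: "'b rel \<Rightarrow> 'b \<Rightarrow> baire set set" where
  "PiH r a = fst (hier r a)"

definition SigmaH :: "'b rel \<Rightarrow> 'b \<Rightarrow> baire set set" where
  "SigmaH r a = snd (hier r a)"

end

theory Submission
  imports Defs "HOL-Library.Nat_Bijection"
begin

text \<open>Suppose \<alpha> is countable and let C be the collapsed class \<Pi>_\<alpha>\<A> or \<Sigma>_\<alpha>\<A>. It is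
  closed under countable unions and intersections, so its ambiguous part
  \<Delta> = {X \<in> C. -X \<in> C} is a \<sigma>-algebra containing \<A>. By induction along \<alpha> one builds, for
  every level \<Pi>_\<beta>\<A> and \<Sigma>_\<beta>\<A> with \<beta> \<le> \<alpha>, a set W of pairs that is universal for the
  level (each member is a section {x. (x, y) \<in> W}) and whose pullback along x \<mapsto> (x, \<psi> x) lies
  in \<Delta> for every \<Delta>-measurable \<psi>; the countability of \<alpha> is what allows the limit stages to
  glue countably many universal sets together. For W universal for C itself and \<psi> the
  identity, the diagonal {x. (x, x) \<in> W} lies in \<Delta>, so its complement is in C and hence a
  section {x. (x, y) \<in> W}, which is absurd at x = y.\<close>

lemma The_maximum_eq:
  assumes "antisym r" and "b \<in> S" and "\<forall>c\<in>S. (c, b) \<in> r"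
  shows "(THE b. b \<in> S \<and> (\<forall>c\<in>S. (c, b) \<in> r)) = b"
  using assms by (intro the_equality) (auto dest: antisymD)

lemma hier_step_cases:
  obtains (zero) "underS r x = {}"
    | (succ) b where "b \<in> underS r x" "\<forall>c \<in> underS r x. (c, b) \<in> r"
    | (limit) "underS r x \<noteq> {}" "\<not> (\<exists>b \<in> underS r x. \<forall>c \<in> underS r x. (c, b) \<in> r)"
  by blast

lemma hier_step_zero: "underS r x = {} \<Longrightarrow> hier_step r h x = (algA, algA)"
  by (simp add: hier_step_def)

lemma hier_step_succ:
  assumes "antisym r" and "b \<in> underS r x" and "\<forall>c \<in> underS r x. (c, b) \<in> r"
  shows "hier_step r h x = (PiF (snd (h b)), SigmaF (fst (h b)))"
proof -
  have "underS r x \<noteq> {}" and "\<exists>b \<in> underS r x. \<forall>c \<in> underS r x. (c, b) \<in> r"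
    using assms(2,3) by blast+
  then show ?thesis by (simp add: hier_step_def The_maximum_eq[OF assms])
qed

lemma hier_step_limit:
  assumes "underS r x \<noteq> {}" and "\<not> (\<exists>b \<in> underS r x. \<forall>c \<in> underS r x. (c, b) \<in> r)"
  shows "hier_step r h x = (\<Union>b\<in>underS r x. fst (h b), \<Union>b\<in>underS r x. snd (h b))"
  unfolding hier_step_def if_not_P[OF assms(1)] if_not_P[OF assms(2)] ..

lemma hier_step_cong:
  assumes "antisym r" and "\<And>y. y \<in> underS r x \<Longrightarrow> f y = g y"
  shows "hier_step r f x = hier_step r g x"
proof (cases rule: hier_step_cases[of r x])
  case zero
  then show ?thesis by (simp add: hier_step_zero)
next
  case (succ b)
  then show ?thesis using assms by (simp add: hier_step_succ[OF assms(1)])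
next
  case limit
  then show ?thesis using assms(2) by (simp add: hier_step_limit)
qed

lemma hier_unfold:
  assumes "Well_order r"
  shows "hier r = hier_step r (hier r)"
proof -
  have wo: "wo_rel r" using assms by (simp add: wo_rel_def)
  have "wo_rel.adm_wo r (hier_step r)"
    unfolding wo_rel.adm_wo_def[OF wo]
  proof (intro allI impI)
    fix f g :: "_ \<Rightarrow> baire set set \<times> baire set set" and x
    assume "\<forall>y \<in> underS r x. f y = g y"
    then show "hier_step r f x = hier_step r g x"
      by (intro hier_step_cong[OF wo_rel.ANTISYM[OF wo]]) blast
  qed
  moreover have "hier r = wo_rel.worec r (hier_step r)"
    by (simp only: wo_rel.worec_def[OF wo] hier_def)
  ultimately show ?thesis using wo_rel.worec_fixpoint[OF wo] by metis
qed

lemma hier_cases[consumes 1, case_names zero succ limit]: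
  assumes "Well_order r"
  obtains "underS r x = {}" "PiH r x = algA" "SigmaH r x = algA"
    | b where "b \<in> underS r x" "PiH r x = PiF (SigmaH r b)" "SigmaH r x = SigmaF (PiH r b)"
    | "underS r x \<noteq> {}"
        "PiH r x = (\<Union>b\<in>underS r x. PiH r b)" "SigmaH r x = (\<Union>b\<in>underS r x. SigmaH r b)"
proof -
  have unfold: "hier r x = hier_step r (hier r) x"
    using hier_unfold[OF assms] by (rule fun_cong)
  have antisym: "antisym r"
    using assms by (simp add: well_order_on_def linear_order_on_def partial_order_on_def)
  show ?thesis
  proof (cases rule: hier_step_cases[of r x])
    case zero
    then show ?thesis using that(1) unfold by (simp add: hier_step_zero PiH_def SigmaH_def)
  next
    case (succ b)
    then show ?thesis
      using that(2) unfold by (simp add: hier_step_succ[OF antisym] PiH_def SigmaH_def)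
  next
    case limit
    then show ?thesis using that(3) unfold by (simp add: hier_step_limit PiH_def SigmaH_def)
  qed
qed

lemma INT_in_PiF:
  fixes Y :: "nat \<Rightarrow> baire set"
  assumes "\<And>n. Y n \<in> X"
  shows "\<Inter>(range Y) \<in> PiF X"
  unfolding PiF_def using assms by (auto intro!: exI[of _ Y])

lemma UN_in_SigmaF:
  fixes Y :: "nat \<Rightarrow> baire set"
  assumes "\<And>n. Y n \<in> X"
  shows "\<Union>(range Y) \<in> SigmaF X"
  unfolding SigmaF_def using assms by (auto intro!: exI[of _ Y])

lemma subset_PiF: "X \<subseteq> PiF X"
  using INT_in_PiF[of "\<lambda>_. _" X] by auto

lemma subset_SigmaF: "X \<subseteq> SigmaF X"
  using UN_in_SigmaF[of "\<lambda>_. _" X] by auto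

lemma algA_subset_hier:
  assumes "Well_order r"
  shows "algA \<subseteq> PiH r x \<and> algA \<subseteq> SigmaH r x"
proof -
  have wf: "wf (r - Id)" using assms by (simp add: well_order_on_def)
  show ?thesis
  proof (induction x rule: wf_induct[OF wf])
    case (1 x)
    then have IH: "algA \<subseteq> PiH r b \<and> algA \<subseteq> SigmaH r b" if "b \<in> underS r x" for b
      using that by (auto simp: underS_def)
    from assms show ?case
    proof (cases rule: hier_cases[of r x])
      case (succ b)
      then show ?thesis using IH[of b] subset_PiF subset_SigmaF by blast
    next
      case limit
      then show ?thesis using IH by blast
    qed simp
  qed
qed

definition sigma_lattice :: "baire set set \<Rightarrow> bool" where
  "sigma_lattice C \<longleftrightarrow> PiF C \<subseteq> C \<and> SigmaF C \<subseteq> C"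

lemma sigma_lattice_Inter:
  assumes "sigma_lattice C" and "countable S" and "S \<noteq> {}" and "S \<subseteq> C"
  shows "\<Inter>S \<in> C"
proof -
  have "\<Inter>(range (from_nat_into S)) \<in> PiF C"
    using from_nat_into[OF assms(3)] assms(4) by (intro INT_in_PiF) blast
  then show ?thesis using assms(1-3) by (auto simp: sigma_lattice_def)
qed

lemma sigma_lattice_Union:
  assumes "sigma_lattice C" and "countable S" and "S \<noteq> {}" and "S \<subseteq> C"
  shows "\<Union>S \<in> C"
proof -
  have "\<Union>(range (from_nat_into S)) \<in> SigmaF C"
    using from_nat_into[OF assms(3)] assms(4) by (intro UN_in_SigmaF) blast
  then show ?thesis using assms(1-3) by (auto simp: sigma_lattice_def)
qed

definition ambiguous :: "baire set set \<Rightarrow> baire set set" where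
  "ambiguous C = {X \<in> C. - X \<in> C}"

lemma ambiguous_Inter:
  assumes "sigma_lattice C" and "countable S" and "S \<noteq> {}" and "S \<subseteq> ambiguous C"
  shows "\<Inter>S \<in> ambiguous C"
proof -
  have "\<Inter>S \<in> C" using assms by (intro sigma_lattice_Inter) (auto simp: ambiguous_def)
  moreover have "\<Union>(uminus ` S) \<in> C"
    using assms by (intro sigma_lattice_Union) (auto simp: ambiguous_def)
  ultimately show ?thesis by (simp add: ambiguous_def uminus_Inf)
qed

lemma ambiguous_Union:
  assumes "sigma_lattice C" and "countable S" and "S \<noteq> {}" and "S \<subseteq> ambiguous C"
  shows "\<Union>S \<in> ambiguous C"
proof -
  have "\<Union>S \<in> C" using assms by (intro sigma_lattice_Union) (auto simp: ambiguous_def)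
  moreover have "\<Inter>(uminus ` S) \<in> C"
    using assms by (intro sigma_lattice_Inter) (auto simp: ambiguous_def)
  ultimately show ?thesis by (simp add: ambiguous_def uminus_Sup)
qed

lemma ambiguous_INT:
  fixes Y :: "nat \<Rightarrow> baire set"
  assumes "sigma_lattice C" and "\<And>n. Y n \<in> ambiguous C"
  shows "\<Inter>(range Y) \<in> ambiguous C"
  using assms by (intro ambiguous_Inter) auto

lemma ambiguous_UN:
  fixes Y :: "nat \<Rightarrow> baire set"
  assumes "sigma_lattice C" and "\<And>n. Y n \<in> ambiguous C"
  shows "\<Union>(range Y) \<in> ambiguous C"
  using assms by (intro ambiguous_Union) auto

lemma ambiguous_Int:
  assumes "sigma_lattice C" and "X \<in> ambiguous C" and "Z \<in> ambiguous C"
  shows "X \<inter> Z \<in> ambiguous C"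
proof -
  have "\<Inter>{X, Z} \<in> ambiguous C" using assms by (intro ambiguous_Inter) auto
  then show ?thesis by simp
qed

lemma literals_subset_algA: "literals \<subseteq> algA"
proof
  fix L assume "L \<in> literals"
  then have "L \<in> conjs" unfolding conjs_def by (intro CollectI exI[of _ "[L]"]) simp
  then show "L \<in> algA" unfolding algA_def by (intro CollectI exI[of _ "[L]"]) simp
qed

lemma algA_subset_ambiguous:
  assumes "sigma_lattice C" and "algA \<subseteq> C"
  shows "algA \<subseteq> ambiguous C"
proof -
  have "- L \<in> literals" if "L \<in> literals" for L
    using that unfolding literals_def by auto
  then have "literals \<subseteq> ambiguous C"
    using literals_subset_algA assms(2) by (auto simp: ambiguous_def)
  then have "conjs \<subseteq> ambiguous C"
    unfolding conjs_def by (auto intro!: ambiguous_Inter[OF assms(1)] countable_finite)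
  then show ?thesis
    unfolding algA_def by (auto intro!: ambiguous_Union[OF assms(1)] countable_finite)
qed

lemma countable_algA: "countable algA"
proof -
  have "literals \<subseteq> case_prod Bset ` UNIV \<union> (\<lambda>(m, n). - Bset m n) ` UNIV"
    unfolding literals_def by auto
  then have "countable literals" by (rule countable_subset) simp
  moreover have "conjs \<subseteq> (\<lambda>l. \<Inter>(set l)) ` lists literals"
    unfolding conjs_def by (force simp: in_lists_conv_set)
  ultimately have "countable conjs"
    by (meson countable_image countable_lists countable_subset)
  moreover have "algA \<subseteq> (\<lambda>l. \<Union>(set l)) ` lists conjs"
    unfolding algA_def by (force simp: in_lists_conv_set)
  ultimately show ?thesis
    by (meson countable_image countable_lists countable_subset)
qed

definition ambiguous_measurable :: "baire set set \<Rightarrow> (baire \<Rightarrow> baire) \<Rightarrow> bool" where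
  "ambiguous_measurable C \<psi> \<longleftrightarrow> (\<forall>m n. \<psi> -` Bset m n \<in> ambiguous C)"

definition ambiguous_on_graphs :: "baire set set \<Rightarrow> (baire \<times> baire) set \<Rightarrow> bool" where
  "ambiguous_on_graphs C W \<longleftrightarrow>
     (\<forall>\<psi>. ambiguous_measurable C \<psi> \<longrightarrow> {x. (x, \<psi> x) \<in> W} \<in> ambiguous C)"

definition universal_for :: "(baire \<times> baire) set \<Rightarrow> baire set set \<Rightarrow> bool" where
  "universal_for W F \<longleftrightarrow> (\<forall>X\<in>F. \<exists>y. X = {x. (x, y) \<in> W})"

lemma ambiguous_on_graphsD:
  "ambiguous_on_graphs C W \<Longrightarrow> ambiguous_measurable C \<psi> \<Longrightarrow> {x. (x, \<psi> x) \<in> W} \<in> ambiguous C"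
  unfolding ambiguous_on_graphs_def by blast

definition has_universal :: "baire set set \<Rightarrow> baire set set \<Rightarrow> bool" where
  "has_universal C F \<longleftrightarrow> (\<exists>W. ambiguous_on_graphs C W \<and> universal_for W F)"

definition column :: "nat \<Rightarrow> baire \<Rightarrow> baire" where
  "column n y = (\<lambda>k. y (prod_encode (n, k)))"

lemma column_join: "column n (\<lambda>j. case_prod ys (prod_decode j)) = ys n"
  by (simp add: column_def)

lemma universal_for_sequence:
  assumes "universal_for W F" and "\<And>n. Y n \<in> F"
  obtains y where "\<And>n. Y n = {x. (x, column n y) \<in> W}"
proof -
  have "\<exists>ys. \<forall>n. Y n = {x. (x, ys n) \<in> W}"
    using assms unfolding universal_for_def by (intro choice) blast
  then obtain ys where "\<forall>n. Y n = {x. (x, ys n) \<in> W}" ..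
  then show ?thesis using that[of "\<lambda>j. case_prod ys (prod_decode j)"] by (simp add: column_join)
qed

lemma ambiguous_measurable_column:
  "ambiguous_measurable C \<psi> \<Longrightarrow> ambiguous_measurable C (\<lambda>x. column n (\<psi> x))"
  unfolding ambiguous_measurable_def column_def Bset_def by (simp add: vimage_def)

definition shift :: "baire \<Rightarrow> baire" where
  "shift y = (\<lambda>k. y (Suc k))"

lemma shift_case_nat: "shift (case_nat k y) = y"
  by (simp add: shift_def)

lemma ambiguous_measurable_shift:
  "ambiguous_measurable C \<psi> \<Longrightarrow> ambiguous_measurable C (\<lambda>x. shift (\<psi> x))"
  unfolding ambiguous_measurable_def shift_def Bset_def by (simp add: vimage_def)

lemma has_universal_algA:
  assumes "sigma_lattice C" and "algA \<subseteq> C"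
  shows "has_universal C algA"
proof -
  define e where "e = from_nat_into algA"
  have "algA \<noteq> {}" using literals_subset_algA by (auto simp: literals_def)
  then have e: "e k \<in> ambiguous C" for k
    unfolding e_def by (rule subsetD[OF algA_subset_ambiguous[OF assms] from_nat_into])
  define W :: "(baire \<times> baire) set" where "W = {(z, y). z \<in> e (y 0)}"
  have "ambiguous_on_graphs C W"
    unfolding ambiguous_on_graphs_def
  proof (intro allI impI)
    fix \<psi> assume "ambiguous_measurable C \<psi>"
    then have "\<psi> -` Bset k 0 \<inter> e k \<in> ambiguous C" for k
      using e by (intro ambiguous_Int[OF assms(1)]) (simp_all add: ambiguous_measurable_def)
    then have "(\<Union>k. \<psi> -` Bset k 0 \<inter> e k) \<in> ambiguous C" by (rule ambiguous_UN[OF assms(1)])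
    moreover have "{x. (x, \<psi> x) \<in> W} = (\<Union>k. \<psi> -` Bset k 0 \<inter> e k)"
      by (auto simp: W_def Bset_def)
    ultimately show "{x. (x, \<psi> x) \<in> W} \<in> ambiguous C" by simp
  qed
  moreover have "universal_for W algA"
    unfolding universal_for_def
  proof
    fix X assume "X \<in> algA"
    then obtain k where "e k = X" using from_nat_into_surj[OF countable_algA] unfolding e_def by blast
    then have "X = {x. (x, \<lambda>_. k) \<in> W}" by (simp add: W_def)
    then show "\<exists>y. X = {x. (x, y) \<in> W}" by blast
  qed
  ultimately show ?thesis unfolding has_universal_def by blast
qed

lemma has_universal_PiF:
  assumes "sigma_lattice C" and "has_universal C F"
  shows "has_universal C (PiF F)"
proof -
  obtain W where W: "ambiguous_on_graphs C W" "universal_for W F"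
    using assms(2) unfolding has_universal_def by blast
  define W' where "W' = {(z, y). \<forall>n. (z, column n y) \<in> W}"
  have "ambiguous_on_graphs C W'"
    unfolding ambiguous_on_graphs_def
  proof (intro allI impI)
    fix \<psi> assume "ambiguous_measurable C \<psi>"
    then have "{x. (x, column n (\<psi> x)) \<in> W} \<in> ambiguous C" for n
      by (intro ambiguous_on_graphsD[OF W(1)] ambiguous_measurable_column)
    then have "(\<Inter>n. {x. (x, column n (\<psi> x)) \<in> W}) \<in> ambiguous C"
      by (rule ambiguous_INT[OF assms(1)])
    moreover have "{x. (x, \<psi> x) \<in> W'} = (\<Inter>n. {x. (x, column n (\<psi> x)) \<in> W})"
      by (auto simp: W'_def)
    ultimately show "{x. (x, \<psi> x) \<in> W'} \<in> ambiguous C" by simp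
  qed
  moreover have "universal_for W' (PiF F)"
    unfolding universal_for_def
  proof
    fix X assume "X \<in> PiF F"
    then obtain Y :: "nat \<Rightarrow> baire set" where Y: "X = \<Inter>(range Y)" "\<And>n. Y n \<in> F"
      unfolding PiF_def by blast
    obtain y where "\<And>n. Y n = {x. (x, column n y) \<in> W}"
      using universal_for_sequence[OF W(2), where Y = Y] Y(2) by blast
    then have "X = {x. (x, y) \<in> W'}" by (auto simp: Y(1) W'_def)
    then show "\<exists>y. X = {x. (x, y) \<in> W'}" by blast
  qed
  ultimately show ?thesis unfolding has_universal_def by blast
qed

lemma has_universal_SigmaF:
  assumes "sigma_lattice C" and "has_universal C F"
  shows "has_universal C (SigmaF F)"
proof -
  obtain W where W: "ambiguous_on_graphs C W" "universal_for W F"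
    using assms(2) unfolding has_universal_def by blast
  define W' where "W' = {(z, y). \<exists>n. (z, column n y) \<in> W}"
  have "ambiguous_on_graphs C W'"
    unfolding ambiguous_on_graphs_def
  proof (intro allI impI)
    fix \<psi> assume "ambiguous_measurable C \<psi>"
    then have "{x. (x, column n (\<psi> x)) \<in> W} \<in> ambiguous C" for n
      by (intro ambiguous_on_graphsD[OF W(1)] ambiguous_measurable_column)
    then have "(\<Union>n. {x. (x, column n (\<psi> x)) \<in> W}) \<in> ambiguous C"
      by (rule ambiguous_UN[OF assms(1)])
    moreover have "{x. (x, \<psi> x) \<in> W'} = (\<Union>n. {x. (x, column n (\<psi> x)) \<in> W})"
      by (auto simp: W'_def)
    ultimately show "{x. (x, \<psi> x) \<in> W'} \<in> ambiguous C" by simp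
  qed
  moreover have "universal_for W' (SigmaF F)"
    unfolding universal_for_def
  proof
    fix X assume "X \<in> SigmaF F"
    then obtain Y :: "nat \<Rightarrow> baire set" where Y: "X = \<Union>(range Y)" "\<And>n. Y n \<in> F"
      unfolding SigmaF_def by blast
    obtain y where "\<And>n. Y n = {x. (x, column n y) \<in> W}"
      using universal_for_sequence[OF W(2), where Y = Y] Y(2) by blast
    then have "X = {x. (x, y) \<in> W'}" by (auto simp: Y(1) W'_def)
    then show "\<exists>y. X = {x. (x, y) \<in> W'}" by blast
  qed
  ultimately show ?thesis unfolding has_universal_def by blast
qed

lemma has_universal_UN:
  fixes F :: "nat \<Rightarrow> baire set set"
  assumes "sigma_lattice C" and "\<And>k. has_universal C (F k)"
  shows "has_universal C (\<Union>k. F k)"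
proof -
  obtain W where W: "\<And>k. ambiguous_on_graphs C (W k)" "\<And>k. universal_for (W k) (F k)"
    using assms(2) unfolding has_universal_def by metis
  define W' where "W' = {(z, y). (z, shift y) \<in> W (y 0)}"
  have "ambiguous_on_graphs C W'"
    unfolding ambiguous_on_graphs_def
  proof (intro allI impI)
    fix \<psi> assume \<psi>: "ambiguous_measurable C \<psi>"
    have "\<psi> -` Bset k 0 \<inter> {x. (x, shift (\<psi> x)) \<in> W k} \<in> ambiguous C" for k
      using \<psi> ambiguous_on_graphsD[OF W(1) ambiguous_measurable_shift[OF \<psi>]]
      by (intro ambiguous_Int[OF assms(1)]) (simp_all add: ambiguous_measurable_def)
    then have "(\<Union>k. \<psi> -` Bset k 0 \<inter> {x. (x, shift (\<psi> x)) \<in> W k}) \<in> ambiguous C"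
      by (rule ambiguous_UN[OF assms(1)])
    moreover have "{x. (x, \<psi> x) \<in> W'} = (\<Union>k. \<psi> -` Bset k 0 \<inter> {x. (x, shift (\<psi> x)) \<in> W k})"
      by (auto simp: W'_def Bset_def)
    ultimately show "{x. (x, \<psi> x) \<in> W'} \<in> ambiguous C" by simp
  qed
  moreover have "universal_for W' (\<Union>k. F k)"
    unfolding universal_for_def
  proof
    fix X assume "X \<in> (\<Union>k. F k)"
    then obtain k y where "X = {x. (x, y) \<in> W k}"
      using W(2) unfolding universal_for_def by blast
    then have "X = {x. (x, case_nat k y) \<in> W'}" by (simp add: W'_def shift_case_nat)
    then show "\<exists>y. X = {x. (x, y) \<in> W'}" by blast
  qed
  ultimately show ?thesis unfolding has_universal_def by blast
qed

lemma has_universal_UNION: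
  assumes "sigma_lattice C" and "countable I" and "I \<noteq> {}"
    and "\<And>i. i \<in> I \<Longrightarrow> has_universal C (F i)"
  shows "has_universal C (\<Union>i\<in>I. F i)"
proof -
  have "(\<Union>i\<in>I. F i) = (\<Union>k. F (from_nat_into I k))"
    using range_from_nat_into[OF assms(3,2)] by (metis image_image)
  moreover have "has_universal C (\<Union>k. F (from_nat_into I k))"
    using assms(4) from_nat_into[OF assms(3)] by (intro has_universal_UN[OF assms(1)]) blast
  ultimately show ?thesis by simp
qed

lemma has_universal_hier:
  assumes "Well_order r" and "countable (underS r a)" and "sigma_lattice C" and "algA \<subseteq> C"
    and "(x, a) \<in> r"
  shows "has_universal C (PiH r x) \<and> has_universal C (SigmaH r x)"
proof -
  have wf: "wf (r - Id)" using assms(1) by (simp add: well_order_on_def)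
  have trans: "trans r" and antisym: "antisym r"
    using assms(1) by (auto simp: well_order_on_def linear_order_on_def partial_order_on_def
        preorder_on_def)
  show ?thesis
    using assms(5)
  proof (induction x rule: wf_induct[OF wf])
    case (1 x)
    have below: "underS r x \<subseteq> underS r a"
      using underS_incr[OF trans antisym "1.prems"] .
    have IH: "has_universal C (PiH r b) \<and> has_universal C (SigmaH r b)" if "b \<in> underS r x" for b
      using "1.IH" that below by (auto simp: underS_def)
    from assms(1) show ?case
    proof (cases rule: hier_cases[of r x])
      case zero
      then show ?thesis using has_universal_algA[OF assms(3,4)] by simp
    next
      case (succ b)
      then show ?thesis using IH[of b] has_universal_PiF has_universal_SigmaF assms(3) by simp
    next
      case limit
      have "countable (underS r x)" using below assms(2) by (rule countable_subset)
      then have "has_universal C (\<Union>b\<in>underS r x. PiH r b)"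
        and "has_universal C (\<Union>b\<in>underS r x. SigmaH r b)"
        using IH by (auto intro!: has_universal_UNION[OF assms(3)] limit(1))
      then show ?thesis using limit(2,3) by simp
    qed
  qed
qed

lemma not_has_universal_self:
  assumes "sigma_lattice C" and "algA \<subseteq> C"
  shows "\<not> has_universal C C"
proof
  assume "has_universal C C"
  then obtain W where W: "ambiguous_on_graphs C W" "universal_for W C"
    unfolding has_universal_def by blast
  have "ambiguous_measurable C (\<lambda>x. x)"
    using literals_subset_algA algA_subset_ambiguous[OF assms]
    by (auto simp: ambiguous_measurable_def literals_def)
  then have "{x. (x, x) \<in> W} \<in> ambiguous C" by (rule ambiguous_on_graphsD[OF W(1)])
  then have "- {x. (x, x) \<in> W} \<in> C" by (simp add: ambiguous_def)
  then obtain y where "- {x. (x, x) \<in> W} = {x. (x, y) \<in> W}"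
    using W(2) unfolding universal_for_def by blast
  then show False by blast
qed

theorem proposition5p28:
  fixes r :: "'b rel" and a :: 'b
  assumes "Well_order r" and "a \<in> Field r"
    and "(PiF (PiH r a) = PiH r a \<and> PiH r a = SigmaF (PiH r a)) \<or>
         (PiF (SigmaH r a) = SigmaH r a \<and> SigmaH r a = SigmaF (SigmaH r a))"
  shows "\<not> countable (underS r a)"
proof
  assume countable: "countable (underS r a)"
  obtain C where C: "C = PiH r a \<or> C = SigmaH r a" and "PiF C = C" and "SigmaF C = C"
    using assms(3) by metis
  then have lattice: "sigma_lattice C" by (simp add: sigma_lattice_def)
  have algA: "algA \<subseteq> C" using algA_subset_hier[OF assms(1)] C by blast
  have "(a, a) \<in> r"
    using assms(1,2) by (simp add: well_order_on_def linear_order_on_def partial_order_on_def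
        preorder_on_def refl_on_def)
  then have "has_universal C C"
    using has_universal_hier[OF assms(1) countable lattice algA] C by blast
  then show False using not_has_universal_self[OF lattice algA] by contradiction
qed

end
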